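(* Let $T>0$, let $q:[0,T]\to\mathbb{R}_+$ be a gauge function such that $q^2$ is of class $C^2$ on $(0,T]$ and $\frac{dq^2}{d\tau}$ is non-increasing, and let $B^q$ be the $q$-Brownian sheet on $[0,T]^d$ defined in the context. Then for any $x,y\in[0,T]^d$, $$E\big([B^q(x)-B^q(y)]^2\big)\le\big[2d\,q^{2(d-1)}(T)\big]\,q^2(|x-y|).$$
   Context: A gauge function is a strictly increasing continuous function $q:[0,T]\to\mathbb{R}_+$ with $q(0)=0$. Let $k=\sqrt{dq^2/d\tau}$ on $(0,T]$. Let $W$ be a Brownian sheet (Gaussian white noise) on $\mathbb{R}_+^d$. The $q$-Brownian sheet is $$B^q(x)=\int_{[0,x]}\prod_{l=1}^d k(x_l-y_l)\,W(dy),\qquad x\in[0,T]^d,$$ a Wiener integral over the rectangle $[0,x]=\prod_l[0,x_l]$; for $d=1$ this is $B^q(x)=\int_0^x k(x-y)\,dW(y)$ with $W$ a standard Brownian motion. *)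

theory Defs
  imports "HOL-Probability.Probability"
begin

definition sq_integrable :: "(real^'d \<Rightarrow> real) \<Rightarrow> bool" where
  "sq_integrable h \<longleftrightarrow> h \<in> borel_measurable lborel \<and> integrable lborel (\<lambda>u. (h u)\<^sup>2)"

text \<open>Wiener integral against Gaussian white noise (isonormal Gaussian process):
  W h is the Wiener integral of h; each W h is centred Gaussian with variance
  the squared L2 norm of h, and covariances are given by the L2 inner product.\<close>
definition white_noise_integral ::
  "'w measure \<Rightarrow> ((real^'d \<Rightarrow> real) \<Rightarrow> 'w \<Rightarrow> real) \<Rightarrow> bool" where
  "white_noise_integral M W \<longleftrightarrow> prob_space M \<and>
    (\<forall>h. sq_integrable h \<longrightarrow>
       W h \<in> borel_measurable M \<and>
       ((\<integral>u. (h u)\<^sup>2 \<partial>lborel) = 0 \<longrightarrow> (AE \<omega> in M. W h \<omega> = 0)) \<and>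
       ((\<integral>u. (h u)\<^sup>2 \<partial>lborel) > 0 \<longrightarrow>
          distributed M lborel (W h) (normal_density 0 (sqrt (\<integral>u. (h u)\<^sup>2 \<partial>lborel))))) \<and>
    (\<forall>h g. sq_integrable h \<longrightarrow> sq_integrable g \<longrightarrow>
       (\<integral>\<omega>. W h \<omega> * W g \<omega> \<partial>M) = (\<integral>u. h u * g u \<partial>lborel))"

definition gauge_function :: "real \<Rightarrow> (real \<Rightarrow> real) \<Rightarrow> bool" where
  "gauge_function T q \<longleftrightarrow> strict_mono_on {0..T} q \<and> continuous_on {0..T} q \<and>
     q 0 = 0 \<and> (\<forall>t\<in>{0..T}. 0 \<le> q t)"

definition sheet_kernel :: "(real \<Rightarrow> real) \<Rightarrow> real^'d \<Rightarrow> real^'d \<Rightarrow> real" where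
  "sheet_kernel k x u = (if (\<forall>l. 0 \<le> u$l \<and> u$l \<le> x$l) then (\<Prod>l\<in>UNIV. k (x$l - u$l)) else 0)"

text \<open>The q-Brownian sheet B^q(x) = Wiener integral of the kernel, with k = sqrt(dq^2/dtau).\<close>
definition q_brownian_sheet ::
  "((real^'d \<Rightarrow> real) \<Rightarrow> 'w \<Rightarrow> real) \<Rightarrow> (real \<Rightarrow> real) \<Rightarrow> real^'d \<Rightarrow> 'w \<Rightarrow> real" where
  "q_brownian_sheet W k x = W (sheet_kernel k x)"

end

theory Submission
  imports Defs
begin

(* By the isometry of the white-noise integral, the second moment of the increment is
   |K_x|^2 - 2 <K_x, K_y> + |K_y|^2 for the kernels K_x of the sheet, and these kernels are
   tensor products of one-dimensional factors, so every term is a product over the coordinates.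
   In one coordinate |K_a|^2 = q(a)^2 by the fundamental theorem of calculus, and since k is
   non-increasing the cross term satisfies <K_a, K_b> >= q(a)^2 - q(a - b)^2 for b <= a.
   A telescoping estimate for products of numbers in [0, q(T)^2] then gives the bound. *)

lemma prod_diff_le:
  fixes M E :: "'i \<Rightarrow> real"
  assumes "finite I"
    and "\<And>i. i \<in> I \<Longrightarrow> 0 \<le> E i" and "\<And>i. i \<in> I \<Longrightarrow> E i \<le> M i"
    and "\<And>i. i \<in> I \<Longrightarrow> M i \<le> Q" and "\<And>i. i \<in> I \<Longrightarrow> M i - E i \<le> D"
  shows "(\<Prod>i\<in>I. M i) - (\<Prod>i\<in>I. E i) \<le> real (card I) * Q ^ (card I - 1) * D"
  using assms
proof (induction I rule: finite_induct)
  case empty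
  then show ?case by simp
next
  case (insert i I)
  let ?n = "card I"
  have IH: "(\<Prod>i\<in>I. M i) - (\<Prod>i\<in>I. E i) \<le> real ?n * Q ^ (?n - 1) * D"
    using insert by auto
  have Ei: "0 \<le> E i" "E i \<le> M i" "M i \<le> Q" "M i - E i \<le> D"
    using insert.prems by auto
  have "0 \<le> (\<Prod>i\<in>I. E i)" "(\<Prod>i\<in>I. E i) \<le> (\<Prod>i\<in>I. M i)"
    using insert.prems by (auto intro: prod_nonneg prod_mono)
  moreover have "(\<Prod>i\<in>I. E i) \<le> Q ^ ?n"
    using insert.prems prod_mono[of I E "\<lambda>_. Q"] by (force intro: order_trans)
  ultimately have "M i * ((\<Prod>i\<in>I. M i) - (\<Prod>i\<in>I. E i)) + (M i - E i) * (\<Prod>i\<in>I. E i)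
      \<le> Q * (real ?n * Q ^ (?n - 1) * D) + D * Q ^ ?n"
    using Ei IH by (intro add_mono mult_mono) auto
  also have "\<dots> = real (card (insert i I)) * Q ^ (card (insert i I) - 1) * D"
    using insert by (cases ?n) (auto simp: algebra_simps)
  finally show ?case
    using insert by (simp add: algebra_simps)
qed

lemma prod_add_prod_minus_twice_prod_le:
  fixes A B C :: "'i \<Rightarrow> real"
  assumes "finite I" and "0 \<le> D"
    and "\<And>i. i \<in> I \<Longrightarrow> 0 \<le> A i \<and> A i \<le> Q"
    and "\<And>i. i \<in> I \<Longrightarrow> 0 \<le> B i \<and> B i \<le> Q"
    and "\<And>i. i \<in> I \<Longrightarrow> 0 \<le> C i \<and> max (A i) (B i) - D \<le> C i"
  shows "(\<Prod>i\<in>I. A i) - 2 * (\<Prod>i\<in>I. C i) + (\<Prod>i\<in>I. B i)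
           \<le> 2 * (real (card I) * Q ^ (card I - 1) * D)"
proof -
  define M where "M i = max (A i) (B i)" for i
  define E where "E i = max (M i - D) 0" for i
  have M: "0 \<le> M i" "M i \<le> Q" if "i \<in> I" for i
    using assms(3,4)[OF that] by (auto simp: M_def)
  have "(\<Prod>i\<in>I. A i) \<le> (\<Prod>i\<in>I. M i)" "(\<Prod>i\<in>I. B i) \<le> (\<Prod>i\<in>I. M i)"
    using assms(3,4) by (auto simp: M_def intro: prod_mono)
  moreover have "(\<Prod>i\<in>I. E i) \<le> (\<Prod>i\<in>I. C i)"
    using assms(5) by (auto simp: E_def M_def intro: prod_mono)
  moreover have "(\<Prod>i\<in>I. M i) - (\<Prod>i\<in>I. E i) \<le> real (card I) * Q ^ (card I - 1) * D"
    using assms(1,2) M by (intro prod_diff_le) (auto simp: E_def)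
  ultimately show ?thesis
    by linarith
qed

lemma integrable_mult_of_squares:
  fixes f g :: "'a \<Rightarrow> real"
  assumes "f \<in> borel_measurable M" "g \<in> borel_measurable M"
    and "integrable M (\<lambda>x. f x * f x)" "integrable M (\<lambda>x. g x * g x)"
  shows "integrable M (\<lambda>x. f x * g x)"
proof (rule Bochner_Integration.integrable_bound)
  show "integrable M (\<lambda>x. f x * f x + g x * g x)"
    using assms(3,4) by (rule Bochner_Integration.integrable_add)
  have "\<bar>f x * g x\<bar> \<le> f x * f x + g x * g x" for x
  proof -
    have "2 * (\<bar>f x\<bar> * \<bar>g x\<bar>) \<le> f x * f x + g x * g x"
      using sum_squares_bound[of "\<bar>f x\<bar>" "\<bar>g x\<bar>"] by (simp add: power2_eq_square mult.assoc)
    moreover have "0 \<le> \<bar>f x\<bar> * \<bar>g x\<bar>"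
      by simp
    ultimately show ?thesis
      unfolding abs_mult by linarith
  qed
  then show "AE x in M. norm (f x * g x) \<le> norm (f x * f x + g x * g x)"
    by simp
qed (use assms in simp)

lemma has_bochner_integral_prod_Basis:
  fixes h :: "'a::euclidean_space \<Rightarrow> real \<Rightarrow> real"
  assumes h: "\<And>b. b \<in> Basis \<Longrightarrow> integrable lborel (h b)"
  shows "has_bochner_integral lborel (\<lambda>x. \<Prod>b\<in>Basis. h b (x \<bullet> b))
           (\<Prod>b\<in>Basis. \<integral>t. h b t \<partial>lborel)"
proof -
  interpret P: product_sigma_finite "\<lambda>_::'a. lborel :: real measure"
    by (simp add: product_sigma_finite_def lborel.sigma_finite_measure_axioms)
  have "has_bochner_integral (\<Pi>\<^sub>M b\<in>Basis. lborel) (\<lambda>f. \<Prod>b\<in>Basis. h b (f b))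
          (\<Prod>b\<in>Basis. \<integral>t. h b t \<partial>lborel)"
    using h by (simp add: has_bochner_integral_iff P.product_integrable_prod P.product_integral_prod)
  then have "has_bochner_integral (\<Pi>\<^sub>M b\<in>Basis. lborel)
      (\<lambda>f. \<Prod>b\<in>Basis. h b ((\<Sum>b'\<in>Basis. f b' *\<^sub>R b') \<bullet> b)) (\<Prod>b\<in>Basis. \<integral>t. h b t \<partial>lborel)"
    by (rule has_bochner_integral_cong[THEN iffD1, rotated -1])
       (simp_all add: inner_sum_left inner_Basis if_distrib sum.delta cong: if_cong)
  moreover have "(\<lambda>x. \<Prod>b\<in>Basis. h b (x \<bullet> b)) \<in> borel_measurable borel"
    using h by (intro borel_measurable_prod)
      (auto intro: measurable_compose[OF borel_measurable_inner[OF measurable_ident_sets[OF refl] measurable_const]])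
  ultimately show ?thesis
    by (subst lborel_eq) (rule has_bochner_integral_distr; simp)
qed

lemma has_bochner_integral_prod_vec:
  fixes h :: "'d::finite \<Rightarrow> real \<Rightarrow> real"
  assumes h: "\<And>l. integrable lborel (h l)"
  shows "has_bochner_integral lborel (\<lambda>x::real^'d. \<Prod>l\<in>UNIV. h l (x $ l))
           (\<Prod>l\<in>UNIV. \<integral>t. h l t \<partial>lborel)"
proof -
  define g where "g b = h (SOME l. b = axis l (1::real))" for b :: "real^'d"
  have g_axis: "g (axis l 1) = h l" for l
    unfolding g_def by (rule arg_cong[where f=h]) (metis (mono_tags, lifting) axis_eq_axis someI_ex zero_neq_one)
  have inj: "inj (\<lambda>l::'d. axis l (1::real))"
    by (auto simp: inj_on_def axis_eq_axis)
  have Basis_vec: "(Basis :: (real^'d) set) = range (\<lambda>l. axis l 1)"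
    by (auto simp: Basis_vec_def)
  have "has_bochner_integral lborel (\<lambda>x::real^'d. \<Prod>b\<in>Basis. g b (x \<bullet> b))
          (\<Prod>b\<in>Basis. \<integral>t. g b t \<partial>lborel)"
    using h by (intro has_bochner_integral_prod_Basis) (auto simp: Basis_vec g_axis)
  then show ?thesis
    unfolding Basis_vec prod.reindex[OF inj] by (simp add: g_axis inner_axis)
qed

lemma has_bochner_integral_of_has_integral_nonneg:
  fixes f :: "'a::euclidean_space \<Rightarrow> real"
  assumes "f \<in> borel_measurable borel" "\<And>x. 0 \<le> f x" "(f has_integral I) UNIV"
  shows "has_bochner_integral lborel f I"
proof (rule has_bochner_integral_nn_integral)
  show "0 \<le> I"
    using has_integral_nonneg[OF assms(3,2)] .
  show "(\<integral>\<^sup>+x. f x \<partial>lborel) = ennreal I"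
    using nn_integral_has_integral_lborel[OF assms] by simp
qed (use assms in auto)

lemma has_bochner_integral_nonneg_derivative:
  fixes G g :: "real \<Rightarrow> real"
  assumes "a \<le> b" and "continuous_on {a..b} G"
    and "\<And>s. s \<in> {a<..<b} \<Longrightarrow> (G has_real_derivative g s) (at s)"
    and "continuous_on {a<..<b} g" and "\<And>s. s \<in> {a<..<b} \<Longrightarrow> 0 \<le> g s"
  shows "has_bochner_integral lborel (\<lambda>s. indicator {a<..<b} s * g s) (G b - G a)"
proof (rule has_bochner_integral_of_has_integral_nonneg)
  have "(g has_integral G b - G a) {a..b}"
    by (rule fundamental_theorem_of_calculus_interior[OF assms(1,2)])
      (use assms(3) in \<open>simp add: has_real_derivative_iff_has_vector_derivative\<close>)
  then have "((\<lambda>s. if s \<in> {a<..<b} then g s else 0) has_integral G b - G a) UNIV"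
    by (simp only: has_integral_Icc_iff_Ioo has_integral_restrict_UNIV)
  moreover have "(\<lambda>s. indicator {a<..<b} s * g s) = (\<lambda>s. if s \<in> {a<..<b} then g s else 0)"
    by (simp add: fun_eq_iff)
  ultimately show "((\<lambda>s. indicator {a<..<b} s * g s) has_integral G b - G a) UNIV"
    by simp
  show "(\<lambda>s. indicator {a<..<b} s * g s) \<in> borel_measurable borel"
    using borel_measurable_continuous_on_indicator[OF _ assms(4)] by simp
  show "0 \<le> indicator {a<..<b} s * g s" for s
    using assms(5) by (simp split: split_indicator)
qed

lemma white_noise_integralD:
  assumes "white_noise_integral M W" and "sq_integrable h"
  shows "W h \<in> borel_measurable M"
    and "(\<integral>u. (h u)\<^sup>2 \<partial>lborel) = 0 \<Longrightarrow> AE \<omega> in M. W h \<omega> = 0"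
    and "sq_integrable g \<Longrightarrow> (\<integral>\<omega>. W h \<omega> * W g \<omega> \<partial>M) = (\<integral>u. h u * g u \<partial>lborel)"
  using assms unfolding white_noise_integral_def by blast+

lemma integrable_white_noise_sq:
  assumes W: "white_noise_integral M W" and h: "sq_integrable h"
  shows "integrable M (\<lambda>\<omega>. W h \<omega> * W h \<omega>)"
proof (cases "(\<integral>u. (h u)\<^sup>2 \<partial>lborel) = 0")
  case True
  then have "AE \<omega> in M. W h \<omega> = 0"
    by (rule white_noise_integralD(2)[OF W h])
  then have "AE \<omega> in M. W h \<omega> * W h \<omega> = 0"
    by eventually_elim simp
  then show ?thesis
    using white_noise_integralD(1)[OF W h] by (subst integrable_cong_AE[where g="\<lambda>_. 0"]) auto
next
  case False
  then have "(\<integral>\<omega>. W h \<omega> * W h \<omega> \<partial>M) \<noteq> 0"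
    using white_noise_integralD(3)[OF W h h] by (simp add: power2_eq_square)
  then show ?thesis
    using not_integrable_integral_eq by blast
qed

lemma white_noise_integral_diff_sq:
  assumes W: "white_noise_integral M W" and h: "sq_integrable h" and g: "sq_integrable g"
  shows "(\<integral>\<omega>. (W h \<omega> - W g \<omega>)\<^sup>2 \<partial>M) =
    (\<integral>u. h u * h u \<partial>lborel) - 2 * (\<integral>u. h u * g u \<partial>lborel) + (\<integral>u. g u * g u \<partial>lborel)"
proof -
  have hh: "integrable M (\<lambda>\<omega>. W h \<omega> * W h \<omega>)" and gg: "integrable M (\<lambda>\<omega>. W g \<omega> * W g \<omega>)"
    using W h g by (simp_all add: integrable_white_noise_sq)
  moreover have "integrable M (\<lambda>\<omega>. W h \<omega> * W g \<omega>)"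
    using white_noise_integralD(1)[OF W h] white_noise_integralD(1)[OF W g] hh gg
    by (rule integrable_mult_of_squares)
  moreover have "(W h \<omega> - W g \<omega>)\<^sup>2 = W h \<omega> * W h \<omega> - 2 * (W h \<omega> * W g \<omega>) + W g \<omega> * W g \<omega>" for \<omega>
    by (simp add: power2_eq_square algebra_simps)
  ultimately have "(\<integral>\<omega>. (W h \<omega> - W g \<omega>)\<^sup>2 \<partial>M) =
     (\<integral>\<omega>. W h \<omega> * W h \<omega> \<partial>M) - 2 * (\<integral>\<omega>. W h \<omega> * W g \<omega> \<partial>M) + (\<integral>\<omega>. W g \<omega> * W g \<omega> \<partial>M)"
    by simp
  then show ?thesis
    using white_noise_integralD(3)[OF W] h g by simp
qed

section \<open>The kernel of the sheet as a tensor product\<close>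

(* For k = sqrt o Q' the value at s = a is k 0, about which nothing is assumed (Q' only lives
   on (0, T]), so the identities for it below hold only off finitely many points. *)
definition kernel_factor :: "(real \<Rightarrow> real) \<Rightarrow> real \<Rightarrow> real \<Rightarrow> real" where
  "kernel_factor k a s = indicator {0..a} s * k (a - s)"

lemma infnorm_le_cart: "(\<And>l. \<bar>z $ l\<bar> \<le> c) \<Longrightarrow> infnorm (z::real^'d::finite) \<le> c"
  unfolding infnorm_Max by (subst Max_le_iff) (auto simp: Basis_vec_def inner_axis)

lemma sheet_kernel_eq_prod:
  "sheet_kernel k x = (\<lambda>u. \<Prod>l\<in>UNIV. kernel_factor k (x $ l) (u $ l))"
proof
  fix u
  show "sheet_kernel k x u = (\<Prod>l\<in>UNIV. kernel_factor k (x $ l) (u $ l))"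
  proof (cases "\<forall>l. 0 \<le> u $ l \<and> u $ l \<le> x $ l")
    case True
    then show ?thesis
      by (simp add: sheet_kernel_def kernel_factor_def)
  next
    case False
    then obtain l where "\<not> (0 \<le> u $ l \<and> u $ l \<le> x $ l)"
      by blast
    then have "kernel_factor k (x $ l) (u $ l) = 0"
      by (simp add: kernel_factor_def)
    then have "(\<Prod>l\<in>UNIV. kernel_factor k (x $ l) (u $ l)) = 0"
      by (intro prod_zero) auto
    then show ?thesis
      unfolding sheet_kernel_def if_not_P[OF False] by simp
  qed
qed

lemma sheet_kernel_measurable:
  fixes x :: "real^'d::finite"
  assumes "\<And>l. kernel_factor k (x $ l) \<in> borel_measurable borel"
  shows "sheet_kernel k x \<in> borel_measurable lborel"
  unfolding sheet_kernel_eq_prod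
proof (rule borel_measurable_prod)
  fix l
  have coordinate: "(\<lambda>u::real^'d. u $ l) \<in> borel_measurable borel"
    by (rule borel_measurable_continuous_onI) (rule linear_continuous_on[OF bounded_linear_vec_nth])
  show "(\<lambda>u. kernel_factor k (x $ l) (u $ l)) \<in> borel_measurable lborel"
    using measurable_compose[OF coordinate assms[of l]] by simp
qed

lemma has_bochner_integral_sheet_kernel_mult:
  fixes x y :: "real^'d::finite"
  assumes "\<And>l. integrable lborel (\<lambda>s. kernel_factor k (x $ l) s * kernel_factor k (y $ l) s)"
  shows "has_bochner_integral lborel (\<lambda>u. sheet_kernel k x u * sheet_kernel k y u)
           (\<Prod>l\<in>UNIV. \<integral>s. kernel_factor k (x $ l) s * kernel_factor k (y $ l) s \<partial>lborel)"
  using has_bochner_integral_prod_vec[OF assms]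
  by (simp add: sheet_kernel_eq_prod prod.distrib)

section \<open>Gauges whose square has a non-increasing derivative\<close>

locale concave_sq_gauge =
  fixes T :: real and q Q' :: "real \<Rightarrow> real"
  assumes gauge: "gauge_function T q"
    and has_derivative_q_sq:
      "\<And>t. t \<in> {0<..T} \<Longrightarrow> ((\<lambda>s. (q s)\<^sup>2) has_real_derivative Q' t) (at t within {0<..T})"
    and continuous_Q': "continuous_on {0<..T} Q'"
    and antimono_Q': "\<And>s t. 0 < s \<Longrightarrow> s \<le> t \<Longrightarrow> t \<le> T \<Longrightarrow> Q' t \<le> Q' s"
begin

abbreviation k :: "real \<Rightarrow> real" where
  "k t \<equiv> sqrt (Q' t)"

lemma continuous_q: "continuous_on {0..T} q"
  using gauge by (simp add: gauge_function_def)

lemma q_mono: "0 \<le> s \<Longrightarrow> s \<le> t \<Longrightarrow> t \<le> T \<Longrightarrow> q s \<le> q t"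
  using gauge unfolding gauge_function_def
  by (meson atLeastAtMost_iff order_trans mono_onD strict_mono_on_imp_mono_on)

lemma q_sq_mono: "0 \<le> s \<Longrightarrow> s \<le> t \<Longrightarrow> t \<le> T \<Longrightarrow> (q s)\<^sup>2 \<le> (q t)\<^sup>2"
  using gauge q_mono by (simp add: gauge_function_def power_mono)

lemma has_derivative_q_sq_at:
  assumes "0 < t" "t < T"
  shows "((\<lambda>s. (q s)\<^sup>2) has_real_derivative Q' t) (at t)"
proof -
  have "((\<lambda>s. (q s)\<^sup>2) has_real_derivative Q' t) (at t within {0<..<T})"
    using assms by (intro has_field_derivative_subset[OF has_derivative_q_sq]) auto
  moreover have "at t within {0<..<T} = at t"
    using assms by (intro at_within_open) auto
  ultimately show ?thesis
    by simp
qed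

lemma Q'_nonneg:
  assumes "0 < t" "t < T"
  shows "0 \<le> Q' t"
proof (rule mono_on_imp_deriv_nonneg[OF _ has_derivative_q_sq_at[OF assms]])
  show "mono_on {0..T} (\<lambda>s. (q s)\<^sup>2)"
    by (intro mono_onI q_sq_mono) auto
  show "t \<in> interior {0..T}"
    using assms by simp
qed

lemma has_bochner_integral_Q'_reflected:
  assumes "0 \<le> c" "c \<le> a" "a \<le> T"
  shows "has_bochner_integral lborel (\<lambda>s. indicator {0<..<c} s * Q' (a - s))
           ((q a)\<^sup>2 - (q (a - c))\<^sup>2)"
proof -
  have "continuous_on {0..c} (\<lambda>s. q (a - s))"
    using assms by (intro continuous_on_compose2[OF continuous_q] continuous_intros) auto
  then have "continuous_on {0..c} (\<lambda>s. - (q (a - s))\<^sup>2)"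
    by (intro continuous_intros)
  moreover have "((\<lambda>s. - (q (a - s))\<^sup>2) has_real_derivative Q' (a - s)) (at s)" if "s \<in> {0<..<c}" for s
  proof -
    have "((\<lambda>s. (q s)\<^sup>2) has_real_derivative Q' (a - s)) (at (a - s))"
      using that assms by (intro has_derivative_q_sq_at) auto
    moreover have "((\<lambda>s. a - s) has_real_derivative -1) (at s)"
      by (auto intro!: derivative_eq_intros)
    ultimately have "((\<lambda>s. (q (a - s))\<^sup>2) has_real_derivative Q' (a - s) * -1) (at s)"
      by (rule DERIV_chain2)
    from DERIV_minus[OF this] show ?thesis
      by simp
  qed
  moreover have "continuous_on {0<..<c} (\<lambda>s. Q' (a - s))"
    using assms by (intro continuous_on_compose2[OF continuous_Q'] continuous_intros) auto
  moreover have "0 \<le> Q' (a - s)" if "s \<in> {0<..<c}" for s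
    using that assms by (intro Q'_nonneg) auto
  ultimately have "has_bochner_integral lborel (\<lambda>s. indicator {0<..<c} s * Q' (a - s))
      (- (q (a - c))\<^sup>2 - - (q (a - 0))\<^sup>2)"
    by (rule has_bochner_integral_nonneg_derivative[OF assms(1)])
  then show ?thesis
    by simp
qed

lemma kernel_factor_measurable:
  assumes "0 \<le> a" "a \<le> T"
  shows "kernel_factor k a \<in> borel_measurable borel"
proof -
  have "continuous_on {0..<a} (\<lambda>s. k (a - s))"
    using assms by (intro continuous_on_compose2[OF continuous_Q'] continuous_intros) auto
  then have "(\<lambda>s. indicator {0..<a} s *\<^sub>R k (a - s)) \<in> borel_measurable borel"
    by (rule borel_measurable_continuous_on_indicator[rotated]) simp
  moreover have "(\<lambda>s. indicator {a} s * k 0) \<in> borel_measurable borel"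
    by simp
  moreover have "kernel_factor k a = (\<lambda>s. indicator {0..<a} s *\<^sub>R k (a - s) + indicator {a} s * k 0)"
    using assms by (auto simp: kernel_factor_def fun_eq_iff split: split_indicator)
  ultimately show ?thesis
    by simp
qed

lemma has_bochner_integral_kernel_factor_sq:
  assumes "0 \<le> a" "a \<le> T"
  shows "has_bochner_integral lborel (\<lambda>s. kernel_factor k a s * kernel_factor k a s) ((q a)\<^sup>2)"
proof -
  have "q 0 = 0"
    using gauge by (simp add: gauge_function_def)
  then have "has_bochner_integral lborel (\<lambda>s. indicator {0<..<a} s * Q' (a - s)) ((q a)\<^sup>2)"
    using has_bochner_integral_Q'_reflected[of a a] assms by simp
  moreover have "indicator {0<..<a} s * Q' (a - s) = kernel_factor k a s * kernel_factor k a s"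
    if "s \<notin> {0, a}" for s
    using that assms Q'_nonneg[of "a - s"] by (auto simp: kernel_factor_def split: split_indicator)
  ultimately show ?thesis
    by (subst (asm) has_bochner_integral_discrete_difference[where X="{0, a}"]) auto
qed

lemma integrable_kernel_factor_mult:
  assumes "0 \<le> a" "a \<le> T" "0 \<le> b" "b \<le> T"
  shows "integrable lborel (\<lambda>s. kernel_factor k a s * kernel_factor k b s)"
proof (rule integrable_mult_of_squares)
  show "kernel_factor k a \<in> borel_measurable lborel" "kernel_factor k b \<in> borel_measurable lborel"
    using assms kernel_factor_measurable by simp_all
  show "integrable lborel (\<lambda>s. kernel_factor k a s * kernel_factor k a s)"
    "integrable lborel (\<lambda>s. kernel_factor k b s * kernel_factor k b s)"
    using assms has_bochner_integral_kernel_factor_sq by (simp_all add: has_bochner_integral_iff)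
qed

(* This is the only place where the monotonicity of Q' is used. *)
lemma kernel_factor_cov_ge:
  assumes "0 \<le> b" "b \<le> a" "a \<le> T"
  shows "(q a)\<^sup>2 - (q (a - b))\<^sup>2 \<le> (\<integral>s. kernel_factor k a s * kernel_factor k b s \<partial>lborel)"
proof -
  have pointwise: "indicator {0<..<b} s * Q' (a - s) \<le> kernel_factor k a s * kernel_factor k b s"
    if "s \<notin> {0, b}" for s
  proof (cases "s \<in> {0<..<b}")
    case True
    then have nonneg: "0 \<le> Q' (a - s)" and antimono: "Q' (a - s) \<le> Q' (b - s)"
      using assms Q'_nonneg antimono_Q' by auto
    then have "Q' (a - s) = k (a - s) * k (a - s)"
      by simp
    also have "\<dots> \<le> k (a - s) * k (b - s)"
      using nonneg antimono by (intro mult_left_mono) auto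
    finally have "Q' (a - s) \<le> k (a - s) * k (b - s)" .
    then show ?thesis
      using True assms by (simp add: kernel_factor_def)
  next
    case False
    then show ?thesis
      using that by (auto simp: kernel_factor_def split: split_indicator)
  qed
  have "AE s in lborel. s \<notin> {0, b}"
    by (rule AE_discrete_difference) auto
  then have AE: "AE s in lborel. indicator {0<..<b} s * Q' (a - s) \<le> kernel_factor k a s * kernel_factor k b s"
    by (rule AE_mp) (auto intro!: AE_I2 pointwise)
  have lower: "has_bochner_integral lborel (\<lambda>s. indicator {0<..<b} s * Q' (a - s))
      ((q a)\<^sup>2 - (q (a - b))\<^sup>2)"
    using assms by (intro has_bochner_integral_Q'_reflected) auto
  have "integrable lborel (\<lambda>s. kernel_factor k a s * kernel_factor k b s)"
    using assms by (intro integrable_kernel_factor_mult) auto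
  with lower AE show ?thesis
    using integral_mono_AE[of lborel "\<lambda>s. indicator {0<..<b} s * Q' (a - s)"]
    by (simp add: has_bochner_integral_iff)
qed

lemma kernel_factor_cov_bounds:
  assumes "0 \<le> a" "a \<le> T" "0 \<le> b" "b \<le> T" and "(q \<bar>a - b\<bar>)\<^sup>2 \<le> D"
  defines "C \<equiv> \<integral>s. kernel_factor k a s * kernel_factor k b s \<partial>lborel"
  shows "0 \<le> C \<and> max ((q a)\<^sup>2) ((q b)\<^sup>2) - D \<le> C"
proof (cases "b \<le> a")
  case True
  then show ?thesis
    using kernel_factor_cov_ge[of b a] q_sq_mono[of "a - b" a] q_sq_mono[of b a] assms by auto
next
  case False
  then show ?thesis
    using kernel_factor_cov_ge[of a b] q_sq_mono[of "b - a" b] q_sq_mono[of a b] assms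
    by (auto simp: mult.commute)
qed

lemma sq_integrable_sheet_kernel:
  fixes x :: "real^'d::finite"
  assumes "\<forall>l. 0 \<le> x $ l \<and> x $ l \<le> T"
  shows "sq_integrable (sheet_kernel k x)"
proof -
  have "kernel_factor k (x $ l) \<in> borel_measurable borel" for l
    using assms by (intro kernel_factor_measurable) auto
  then have "sheet_kernel k x \<in> borel_measurable lborel"
    by (rule sheet_kernel_measurable)
  moreover have "integrable lborel (\<lambda>u. sheet_kernel k x u * sheet_kernel k x u)"
  proof -
    have "integrable lborel (\<lambda>s. kernel_factor k (x $ l) s * kernel_factor k (x $ l) s)" for l
      using assms by (intro integrable_kernel_factor_mult) auto
    from has_bochner_integral_sheet_kernel_mult[OF this] show ?thesis
      by (simp add: has_bochner_integral_iff)
  qed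
  ultimately show ?thesis
    by (simp add: sq_integrable_def power2_eq_square)
qed

lemma q_brownian_sheet_increment_second_moment:
  fixes x y :: "real^'d::finite"
  assumes "white_noise_integral M W"
    and "\<forall>l. 0 \<le> x $ l \<and> x $ l \<le> T" and "\<forall>l. 0 \<le> y $ l \<and> y $ l \<le> T"
  shows "(\<integral>\<omega>. (q_brownian_sheet W k x \<omega> - q_brownian_sheet W k y \<omega>)\<^sup>2 \<partial>M)
    = (\<Prod>l\<in>UNIV. (q (x $ l))\<^sup>2)
      - 2 * (\<Prod>l\<in>UNIV. \<integral>s. kernel_factor k (x $ l) s * kernel_factor k (y $ l) s \<partial>lborel)
      + (\<Prod>l\<in>UNIV. (q (y $ l))\<^sup>2)"
proof -
  have inner: "(\<integral>u. sheet_kernel k z u * sheet_kernel k z' u \<partial>lborel)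
      = (\<Prod>l\<in>UNIV. \<integral>s. kernel_factor k (z $ l) s * kernel_factor k (z' $ l) s \<partial>lborel)"
    if "z \<in> {x, y}" "z' \<in> {x, y}" for z z'
    using that assms integrable_kernel_factor_mult
    by (intro has_bochner_integral_integral_eq has_bochner_integral_sheet_kernel_mult) auto
  have norm: "(\<integral>s. kernel_factor k (z $ l) s * kernel_factor k (z $ l) s \<partial>lborel) = (q (z $ l))\<^sup>2"
    if "z \<in> {x, y}" for z l
    using that assms by (intro has_bochner_integral_integral_eq has_bochner_integral_kernel_factor_sq) auto
  show ?thesis
    using assms unfolding q_brownian_sheet_def
    by (simp add: white_noise_integral_diff_sq sq_integrable_sheet_kernel inner norm)
qed

lemma q_sq_component_le_infnorm:
  fixes x y :: "real^'d::finite"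
  assumes "\<forall>l. 0 \<le> x $ l \<and> x $ l \<le> T" and "\<forall>l. 0 \<le> y $ l \<and> y $ l \<le> T"
  shows "(q \<bar>x $ l - y $ l\<bar>)\<^sup>2 \<le> (q (infnorm (x - y)))\<^sup>2"
proof -
  have "\<bar>(x - y) $ i\<bar> \<le> T" for i
    using assms(1)[rule_format, of i] assms(2)[rule_format, of i] by (auto simp: abs_le_iff)
  then have "infnorm (x - y) \<le> T"
    by (rule infnorm_le_cart)
  then show ?thesis
    using component_le_infnorm_cart[of "x - y" l] by (intro q_sq_mono) auto
qed

end

theorem proposition3p1:
  fixes T :: real and q Q' Q'' :: "real \<Rightarrow> real"
    and M :: "'w measure" and W :: "(real^'d::finite \<Rightarrow> real) \<Rightarrow> 'w \<Rightarrow> real"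
    and x y :: "real^'d"
  assumes "T > 0"
    and "gauge_function T q"
    and "\<And>t. t \<in> {0<..T} \<Longrightarrow> ((\<lambda>s. (q s)\<^sup>2) has_real_derivative Q' t) (at t within {0<..T})"
    and "\<And>t. t \<in> {0<..T} \<Longrightarrow> (Q' has_real_derivative Q'' t) (at t within {0<..T})"
    and "continuous_on {0<..T} Q''"
    and "\<And>s t. 0 < s \<Longrightarrow> s \<le> t \<Longrightarrow> t \<le> T \<Longrightarrow> Q' t \<le> Q' s"
    and "white_noise_integral M W"
    and "\<forall>l. 0 \<le> x$l \<and> x$l \<le> T"
    and "\<forall>l. 0 \<le> y$l \<and> y$l \<le> T"
  shows "(\<integral>\<omega>. (q_brownian_sheet W (\<lambda>t. sqrt (Q' t)) x \<omega>
                 - q_brownian_sheet W (\<lambda>t. sqrt (Q' t)) y \<omega>)\<^sup>2 \<partial>M)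
         \<le> (2 * real CARD('d) * (q T) ^ (2 * (CARD('d) - 1))) * (q (infnorm (x - y)))\<^sup>2"
proof -
  interpret concave_sq_gauge T q Q'
    using assms(2,3,6) DERIV_continuous_on[OF assms(4)] by unfold_locales auto
  define D where "D = (q (infnorm (x - y)))\<^sup>2"
  have x: "0 \<le> x $ l \<and> x $ l \<le> T" and y: "0 \<le> y $ l \<and> y $ l \<le> T" for l
    using assms(8,9) by blast+
  have "(\<integral>\<omega>. (q_brownian_sheet W k x \<omega> - q_brownian_sheet W k y \<omega>)\<^sup>2 \<partial>M)
      \<le> 2 * (real CARD('d) * ((q T)\<^sup>2) ^ (CARD('d) - 1) * D)"
    unfolding q_brownian_sheet_increment_second_moment[OF assms(7-9)]
  proof (rule prod_add_prod_minus_twice_prod_le)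
    fix l
    show "0 \<le> (q (x $ l))\<^sup>2 \<and> (q (x $ l))\<^sup>2 \<le> (q T)\<^sup>2" "0 \<le> (q (y $ l))\<^sup>2 \<and> (q (y $ l))\<^sup>2 \<le> (q T)\<^sup>2"
      using x[of l] y[of l] q_sq_mono by auto
    show "0 \<le> (\<integral>s. kernel_factor k (x $ l) s * kernel_factor k (y $ l) s \<partial>lborel)
      \<and> max ((q (x $ l))\<^sup>2) ((q (y $ l))\<^sup>2) - D
        \<le> (\<integral>s. kernel_factor k (x $ l) s * kernel_factor k (y $ l) s \<partial>lborel)"
      using x[of l] y[of l] q_sq_component_le_infnorm[OF assms(8,9)]
      by (intro kernel_factor_cov_bounds) (auto simp: D_def)
  qed (simp_all add: D_def)
  then show ?thesis
    by (simp add: D_def power_mult)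
qed

end
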